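(* Let $\mu\in\mathbb R\setminus\{0\}$ and $r=\frac{\mu}{e^{\mu}-1}$. Then for all $x\in[0,1]$, $$1-e^{-\mu x}\le\left(1-e^{-\mu}\right)x^{r}.$$
   Context: Here $x^r$ at $x=0$ is interpreted as $0$ (note $r>0$). *)

theory Defs
  imports Complex_Main
begin

end

theory Submission
  imports Defs "HOL-Analysis.Analysis"
begin

text \<open>With \<open>r = \<mu> / (exp \<mu> - 1) > 0\<close>, the function
  \<open>\<phi> t = (1 - exp (- \<mu> t)) * t powr (- r)\<close> is nondecreasing on \<open>(0, 1]\<close>: its derivative is
  \<open>t powr (- r - 1) * exp (- \<mu> t) * (\<mu> t - r (exp (\<mu> t) - 1))\<close>, and
  \<open>r (exp (\<mu> t) - 1) \<le> r t (exp \<mu> - 1) = \<mu> t\<close> by convexity of \<open>exp\<close> along the chord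
  from \<open>0\<close> to \<open>\<mu>\<close>. Hence \<open>\<phi> x \<le> \<phi> 1 = 1 - exp (- \<mu>)\<close>.\<close>

lemma exp_mult_le_chord:
  fixes \<mu> x :: real
  assumes "0 \<le> x" "x \<le> 1"
  shows "exp (\<mu> * x) - 1 \<le> x * (exp \<mu> - 1)"
proof -
  have "exp ((1 - x) * 0 + x * \<mu>) \<le> (1 - x) * exp 0 + x * exp \<mu>"
    using convex_onD[OF exp_convex, of x 0 \<mu>] assms by simp
  then show ?thesis by (simp add: algebra_simps)
qed

lemma divide_exp_minus_one_pos:
  fixes \<mu> :: real
  assumes "\<mu> \<noteq> 0"
  shows "0 < \<mu> / (exp \<mu> - 1)"
  using assms by (cases "\<mu> > 0") (auto simp: zero_less_divide_iff)

lemma one_minus_exp_mult_powr_mono: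
  fixes \<mu> r x y :: real
  assumes "0 < x" "x \<le> y"
    and sign: "\<And>t. x \<le> t \<Longrightarrow> t \<le> y \<Longrightarrow> r * (exp (\<mu> * t) - 1) \<le> \<mu> * t"
  shows "(1 - exp (- \<mu> * x)) * x powr (- r) \<le> (1 - exp (- \<mu> * y)) * y powr (- r)"
proof (rule DERIV_nonneg_imp_nondecreasing[OF \<open>x \<le> y\<close>])
  fix t assume t: "x \<le> t" "t \<le> y"
  then have "0 < t" using \<open>0 < x\<close> by simp
  let ?D = "\<mu> * exp (- \<mu> * t) * t powr (- r) + (1 - exp (- \<mu> * t)) * (- r * t powr (- r - 1))"
  have deriv: "((\<lambda>t. (1 - exp (- \<mu> * t)) * t powr (- r)) has_real_derivative ?D) (at t)"
    using \<open>0 < t\<close> by (auto intro!: derivative_eq_intros)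
  have "t powr (- r - 1) = t powr (- r) / t" "exp (\<mu> * t) * exp (- \<mu> * t) = 1"
    using \<open>0 < t\<close> by (simp_all add: powr_diff flip: exp_add)
  then have "?D = t powr (- r - 1) * exp (- \<mu> * t) * (\<mu> * t - r * (exp (\<mu> * t) - 1))"
    using \<open>0 < t\<close> by (simp add: field_simps)
  also have "\<dots> \<ge> 0"
    using sign[OF t] by simp
  finally show "\<exists>D. ((\<lambda>t. (1 - exp (- \<mu> * t)) * t powr (- r)) has_real_derivative D) (at t) \<and> 0 \<le> D"
    using deriv by blast
qed

theorem mainTheorem4:
  fixes \<mu> x :: real
  assumes "\<mu> \<noteq> 0"
    and "0 \<le> x" and "x \<le> 1"
  shows "1 - exp (- \<mu> * x) \<le> (1 - exp (- \<mu>)) * x powr (\<mu> / (exp \<mu> - 1))"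
proof (cases "x = 0")
  case True
  then show ?thesis by simp
next
  case False
  with assms have "0 < x" by simp
  define r where "r = \<mu> / (exp \<mu> - 1)"
  have "0 < r" unfolding r_def using divide_exp_minus_one_pos[OF \<open>\<mu> \<noteq> 0\<close>] .
  have "r * (exp (\<mu> * t) - 1) \<le> \<mu> * t" if "0 \<le> t" "t \<le> 1" for t
  proof -
    have "r * (exp (\<mu> * t) - 1) \<le> r * (t * (exp \<mu> - 1))"
      using exp_mult_le_chord[OF that] \<open>0 < r\<close> by (simp add: mult_left_mono)
    also have "\<dots> = \<mu> * t"
      using \<open>\<mu> \<noteq> 0\<close> unfolding r_def by simp
    finally show ?thesis .
  qed
  then have "(1 - exp (- \<mu> * x)) * x powr (- r) \<le> (1 - exp (- \<mu>)) * 1 powr (- r)"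
    using one_minus_exp_mult_powr_mono[of x 1 r \<mu>] \<open>0 < x\<close> \<open>x \<le> 1\<close> by simp
  then have "(1 - exp (- \<mu> * x)) * (x powr (- r) * x powr r) \<le> (1 - exp (- \<mu>)) * x powr r"
    by (simp add: mult_right_mono flip: mult.assoc)
  moreover have "x powr (- r) * x powr r = 1"
    using \<open>0 < x\<close> by (simp flip: powr_add)
  ultimately show ?thesis
    unfolding r_def by simp
qed

end
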